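(* Let $G=(V,E)$ be a finite, simple, connected reflective graph and $x\in V$. Assume the subgraph induced on $S_1(x)$ is connected. Then $S_1(x)$ is isometric.
   Context: $d$ is the combinatorial distance, $S_n(x)=\{v:d(v,x)=n\}$. For adjacent $x\sim y$ let $V_x^y=\{v: d(v,x)<d(v,y)\}$, $V^{xy}=\{v:d(v,x)=d(v,y)\}$. A reflection from $x$ to $y$ is a graph automorphism $\phi$ with $\phi\circ\phi=\mathrm{id}$, $\phi(x)=y$, such that the edges between $V_x^y$ and $V_y^x$ are exactly $\{\{x',\phi(x')\}:x'\in V_x^y\}$ and $\phi$ fixes $V^{xy}$ pointwise. A graph is reflective if every edge admits a reflection. A set $W\subseteq V$ is isometric if for all $w,w'\in W$ there is a shortest path in $G$ from $w$ to $w'$ all of whose vertices lie in $W$. *)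

theory Defs
  imports Main
begin

definition simple_graph :: "'a set \<Rightarrow> ('a \<Rightarrow> 'a \<Rightarrow> bool) \<Rightarrow> bool" where
  "simple_graph V E \<longleftrightarrow> finite V \<and> (\<forall>u v. E u v \<longrightarrow> u \<in> V \<and> v \<in> V)
     \<and> (\<forall>u v. E u v \<longrightarrow> E v u) \<and> (\<forall>u. \<not> E u u)"

(* a walk given as the list of its vertices; its length is length xs - 1 *)
fun walk :: "('a \<Rightarrow> 'a \<Rightarrow> bool) \<Rightarrow> 'a list \<Rightarrow> bool" where
  "walk E [] = False"
| "walk E [v] = True"
| "walk E (u # v # vs) = (E u v \<and> walk E (v # vs))"

definition walk_betw :: "('a \<Rightarrow> 'a \<Rightarrow> bool) \<Rightarrow> 'a \<Rightarrow> 'a list \<Rightarrow> 'a \<Rightarrow> bool" where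
  "walk_betw E u xs v \<longleftrightarrow> walk E xs \<and> hd xs = u \<and> last xs = v"

definition connected_graph :: "'a set \<Rightarrow> ('a \<Rightarrow> 'a \<Rightarrow> bool) \<Rightarrow> bool" where
  "connected_graph V E \<longleftrightarrow> (\<forall>u\<in>V. \<forall>v\<in>V. \<exists>xs. walk_betw E u xs v)"

definition dist :: "('a \<Rightarrow> 'a \<Rightarrow> bool) \<Rightarrow> 'a \<Rightarrow> 'a \<Rightarrow> nat" where
  "dist E u v = (LEAST n. \<exists>xs. walk_betw E u xs v \<and> length xs = Suc n)"

definition sphere :: "'a set \<Rightarrow> ('a \<Rightarrow> 'a \<Rightarrow> bool) \<Rightarrow> nat \<Rightarrow> 'a \<Rightarrow> 'a set" where
  "sphere V E n x = {v \<in> V. dist E v x = n}"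

definition halfspace :: "'a set \<Rightarrow> ('a \<Rightarrow> 'a \<Rightarrow> bool) \<Rightarrow> 'a \<Rightarrow> 'a \<Rightarrow> 'a set" where
  "halfspace V E x y = {v \<in> V. dist E v x < dist E v y}"

definition midset :: "'a set \<Rightarrow> ('a \<Rightarrow> 'a \<Rightarrow> bool) \<Rightarrow> 'a \<Rightarrow> 'a \<Rightarrow> 'a set" where
  "midset V E x y = {v \<in> V. dist E v x = dist E v y}"

definition graph_automorphism :: "'a set \<Rightarrow> ('a \<Rightarrow> 'a \<Rightarrow> bool) \<Rightarrow> ('a \<Rightarrow> 'a) \<Rightarrow> bool" where
  "graph_automorphism V E \<phi> \<longleftrightarrow> bij_betw \<phi> V V
     \<and> (\<forall>u\<in>V. \<forall>v\<in>V. E (\<phi> u) (\<phi> v) \<longleftrightarrow> E u v)"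

definition reflection :: "'a set \<Rightarrow> ('a \<Rightarrow> 'a \<Rightarrow> bool) \<Rightarrow> 'a \<Rightarrow> 'a \<Rightarrow> ('a \<Rightarrow> 'a) \<Rightarrow> bool" where
  "reflection V E x y \<phi> \<longleftrightarrow>
     graph_automorphism V E \<phi>
     \<and> (\<forall>v\<in>V. \<phi> (\<phi> v) = v)
     \<and> \<phi> x = y
     \<and> {{a, b} | a b. a \<in> halfspace V E x y \<and> b \<in> halfspace V E y x \<and> E a b}
        = {{a, \<phi> a} | a. a \<in> halfspace V E x y}
     \<and> (\<forall>v\<in>midset V E x y. \<phi> v = v)"

definition reflective :: "'a set \<Rightarrow> ('a \<Rightarrow> 'a \<Rightarrow> bool) \<Rightarrow> bool" where
  "reflective V E \<longleftrightarrow> (\<forall>x y. E x y \<longrightarrow> (\<exists>\<phi>. reflection V E x y \<phi>))"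

definition induced_connected :: "('a \<Rightarrow> 'a \<Rightarrow> bool) \<Rightarrow> 'a set \<Rightarrow> bool" where
  "induced_connected E W \<longleftrightarrow>
     (\<forall>u\<in>W. \<forall>v\<in>W. \<exists>xs. walk_betw E u xs v \<and> set xs \<subseteq> W)"

definition isometric :: "('a \<Rightarrow> 'a \<Rightarrow> bool) \<Rightarrow> 'a set \<Rightarrow> bool" where
  "isometric E W \<longleftrightarrow>
     (\<forall>w\<in>W. \<forall>w'\<in>W. \<exists>xs. walk_betw E w xs w' \<and> length xs = Suc (dist E w w')
        \<and> set xs \<subseteq> W)"

end

theory Submission
  imports Defs
begin

text \<open>Let \<open>a \<sim> b\<close> be an edge inside \<open>S\<^sub>1(x)\<close> and \<open>w \<in> S\<^sub>1(x)\<close> at distance 2 from both \<open>a\<close> and \<open>b\<close>.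
  The reflection from \<open>a\<close> to \<open>b\<close> fixes \<open>x\<close> and \<open>w\<close>, which lie on its midset, so it maps a common
  neighbour of \<open>b\<close> and \<open>w\<close> in \<open>S\<^sub>1(x)\<close> to a common neighbour of \<open>a\<close> and \<open>w\<close> in \<open>S\<^sub>1(x)\<close>. Hence
  "joined to \<open>w\<close> by a path of length at most 2 inside \<open>S\<^sub>1(x)\<close>" propagates along the edges of
  \<open>S\<^sub>1(x)\<close>, and by connectedness of \<open>S\<^sub>1(x)\<close> it holds for all pairs. Such short paths are
  shortest paths of \<open>G\<close>, because two distinct non-adjacent vertices of \<open>S\<^sub>1(x)\<close> have distance 2.\<close>

definition within_two :: "('a \<Rightarrow> 'a \<Rightarrow> bool) \<Rightarrow> 'a set \<Rightarrow> 'a \<Rightarrow> 'a \<Rightarrow> bool" where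
  "within_two E W u v \<longleftrightarrow> u = v \<or> E u v \<or> (\<exists>z\<in>W. E u z \<and> E z v)"

lemma walk_nonempty: "walk E xs \<Longrightarrow> xs \<noteq> []"
  by (cases xs) auto

lemma dist_le_walk_length:
  assumes "walk_betw E u xs v" "length xs = Suc n"
  shows "dist E u v \<le> n"
  unfolding dist_def by (rule Least_le) (use assms in blast)

lemma shortest_walk_exists:
  assumes "connected_graph V E" "u \<in> V" "v \<in> V"
  shows "\<exists>xs. walk_betw E u xs v \<and> length xs = Suc (dist E u v)"
proof -
  obtain xs where xs: "walk_betw E u xs v"
    using assms unfolding connected_graph_def by blast
  then have "length xs = Suc (length xs - 1)"
    using walk_nonempty unfolding walk_betw_def by fastforce
  with xs have "\<exists>n ys. walk_betw E u ys v \<and> length ys = Suc n"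
    by blast
  then show ?thesis
    unfolding dist_def by (rule LeastI_ex)
qed

lemma dist_self: "dist E u u = 0"
  using dist_le_walk_length[of E u "[u]" u 0] by (simp add: walk_betw_def)

lemma dist_eq_0D:
  assumes "connected_graph V E" "u \<in> V" "v \<in> V" "dist E u v = 0"
  shows "u = v"
proof -
  obtain xs where "walk_betw E u xs v" "length xs = Suc 0"
    using shortest_walk_exists[OF assms(1-3)] assms(4) by auto
  then show ?thesis
    by (cases xs) (auto simp: walk_betw_def)
qed

lemma dist_eq_1_iff:
  assumes "simple_graph V E" "connected_graph V E" "u \<in> V" "v \<in> V"
  shows "dist E u v = 1 \<longleftrightarrow> E u v"
proof
  assume "dist E u v = 1"
  then obtain xs where "walk_betw E u xs v" "length xs = Suc (Suc 0)"
    using shortest_walk_exists[OF assms(2-4)] by auto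
  moreover from this(2) obtain p q where "xs = [p, q]"
    by (metis length_0_conv length_Suc_conv)
  ultimately show "E u v"
    by (auto simp: walk_betw_def)
next
  assume "E u v"
  then have "dist E u v \<le> 1"
    using dist_le_walk_length[of E u "[u, v]" v 1] by (simp add: walk_betw_def)
  moreover have "u \<noteq> v"
    using \<open>E u v\<close> assms(1) unfolding simple_graph_def by auto
  then have "dist E u v \<noteq> 0"
    using dist_eq_0D[OF assms(2-4)] by auto
  ultimately show "dist E u v = 1"
    by simp
qed

lemma dist_eq_2I:
  assumes "simple_graph V E" "connected_graph V E" "u \<in> V" "v \<in> V"
    and "E u z" "E z v" "u \<noteq> v" "\<not> E u v"
  shows "dist E u v = 2"
proof -
  have "dist E u v \<le> 2"
    using dist_le_walk_length[of E u "[u, z, v]" v 2] assms(5,6) by (simp add: walk_betw_def)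
  moreover have "dist E u v \<noteq> 0"
    using dist_eq_0D[OF assms(2-4)] assms(7) by auto
  moreover have "dist E u v \<noteq> 1"
    using dist_eq_1_iff[OF assms(1-4)] assms(8) by auto
  ultimately show ?thesis
    by simp
qed

lemma within_two_imp_shortest_walk:
  assumes "simple_graph V E" "connected_graph V E" "W \<subseteq> V" "u \<in> W" "v \<in> W"
    and "within_two E W u v"
  shows "\<exists>xs. walk_betw E u xs v \<and> length xs = Suc (dist E u v) \<and> set xs \<subseteq> W"
proof -
  have uV: "u \<in> V" and vV: "v \<in> V"
    using assms(3-5) by auto
  consider "u = v" | "E u v" | z where "z \<in> W" "E u z" "E z v" "u \<noteq> v" "\<not> E u v"
    using assms(6) unfolding within_two_def by blast
  then show ?thesis
  proof cases
    case 1
    then show ?thesis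
      using assms(4) dist_self[of E u] by (intro exI[of _ "[u]"]) (auto simp: walk_betw_def)
  next
    case 2
    then show ?thesis
      using assms(4,5) dist_eq_1_iff[OF assms(1,2) uV vV]
      by (intro exI[of _ "[u, v]"]) (auto simp: walk_betw_def)
  next
    case (3 z)
    then show ?thesis
      using assms(4,5) dist_eq_2I[OF assms(1,2) uV vV, of z]
      by (intro exI[of _ "[u, z, v]"]) (auto simp: walk_betw_def)
  qed
qed

lemma mem_sphere_1_iff:
  assumes "simple_graph V E" "connected_graph V E" "x \<in> V"
  shows "v \<in> sphere V E 1 x \<longleftrightarrow> v \<in> V \<and> E v x"
  using dist_eq_1_iff[OF assms(1,2) _ assms(3)] unfolding sphere_def by auto

lemma reflection_adj_iff:
  assumes "reflection V E a b \<phi>" "u \<in> V" "v \<in> V"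
  shows "E (\<phi> u) (\<phi> v) \<longleftrightarrow> E u v"
proof -
  have "graph_automorphism V E \<phi>"
    using assms(1) unfolding reflection_def by (elim conjE)
  then show ?thesis
    using assms(2,3) unfolding graph_automorphism_def by blast
qed

lemma reflection_in_vertices:
  assumes "reflection V E a b \<phi>" "v \<in> V"
  shows "\<phi> v \<in> V"
proof -
  have "graph_automorphism V E \<phi>"
    using assms(1) unfolding reflection_def by (elim conjE)
  then show ?thesis
    using assms(2) unfolding graph_automorphism_def bij_betw_def by blast
qed

lemma reflection_target:
  assumes "reflection V E a b \<phi>" "a \<in> V"
  shows "\<phi> b = a"
proof -
  have "\<forall>v\<in>V. \<phi> (\<phi> v) = v"
    using assms(1) unfolding reflection_def by (elim conjE)
  moreover have "\<phi> a = b"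
    using assms(1) unfolding reflection_def by (elim conjE)
  ultimately show ?thesis
    using assms(2) by metis
qed

lemma reflection_fixes_equidistant:
  assumes "reflection V E a b \<phi>" "v \<in> V" "dist E v a = dist E v b"
  shows "\<phi> v = v"
proof -
  have "\<forall>v\<in>midset V E a b. \<phi> v = v"
    using assms(1) unfolding reflection_def by (elim conjE)
  then show ?thesis
    using assms(2,3) unfolding midset_def by blast
qed

lemma within_two_sphere_1_step:
  assumes G: "simple_graph V E" and C: "connected_graph V E" and R: "reflective V E"
    and x: "x \<in> V"
  defines "S \<equiv> sphere V E 1 x"
  assumes a: "a \<in> S" and b: "b \<in> S" and w: "w \<in> S" and ab: "E a b"
    and bw: "within_two E S b w"
  shows "within_two E S a w"
proof (rule ccontr)
  assume aw: "\<not> within_two E S a w"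
  have S_iff: "\<And>v. v \<in> S \<longleftrightarrow> v \<in> V \<and> E v x"
    unfolding S_def using mem_sphere_1_iff[OF G C x] by blast
  have E_sym: "\<And>u v. E u v \<Longrightarrow> E v u"
    using G unfolding simple_graph_def by blast
  have aV: "a \<in> V" and bV: "b \<in> V" and wV: "w \<in> V"
    and ax: "E a x" and bx: "E b x" and wx: "E w x"
    using a b w S_iff by auto
  obtain z where z: "z \<in> S" "E b z" "E z w" and "b \<noteq> w" "\<not> E b w"
    using bw aw ab b unfolding within_two_def by blast
  have "a \<noteq> w" "\<not> E a w"
    using aw unfolding within_two_def by auto
  obtain \<phi> where \<phi>: "reflection V E a b \<phi>"
    using R ab unfolding reflective_def by blast
  have "\<phi> x = x"
    using dist_eq_1_iff[OF G C x aV] dist_eq_1_iff[OF G C x bV] ax bx E_sym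
    by (intro reflection_fixes_equidistant[OF \<phi> x]) auto
  have "dist E w a = 2" "dist E w b = 2"
    using dist_eq_2I[OF G C wV aV, of x] dist_eq_2I[OF G C wV bV, of x]
      \<open>a \<noteq> w\<close> \<open>\<not> E a w\<close> \<open>b \<noteq> w\<close> \<open>\<not> E b w\<close> wx ax bx E_sym by auto
  then have "\<phi> w = w"
    by (intro reflection_fixes_equidistant[OF \<phi> wV]) simp
  have zV: "z \<in> V"
    using z(1) S_iff by blast
  have "\<phi> z \<in> S"
    using reflection_in_vertices[OF \<phi> zV] reflection_adj_iff[OF \<phi> zV x] z(1) S_iff \<open>\<phi> x = x\<close>
    by auto
  moreover have "E a (\<phi> z)"
    using reflection_adj_iff[OF \<phi> bV zV] reflection_target[OF \<phi> aV] z(2) by simp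
  moreover have "E (\<phi> z) w"
    using reflection_adj_iff[OF \<phi> zV wV] \<open>\<phi> w = w\<close> z(3) by simp
  ultimately show False
    using aw unfolding within_two_def by blast
qed

lemma within_two_sphere_1_walk:
  assumes "simple_graph V E" "connected_graph V E" "reflective V E" "x \<in> V"
  shows "walk E xs \<Longrightarrow> set xs \<subseteq> sphere V E 1 x \<Longrightarrow>
    within_two E (sphere V E 1 x) (hd xs) (last xs)"
proof (induction xs rule: induct_list012)
  case 1
  then show ?case
    by simp
next
  case (2 v)
  then show ?case
    by (simp add: within_two_def)
next
  case (3 u v vs)
  then have "within_two E (sphere V E 1 x) v (last (v # vs))"
    by simp
  moreover have "last (v # vs) \<in> sphere V E 1 x"
    using "3.prems"(2) last_in_set[of "v # vs"] by auto
  ultimately show ?case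
    using within_two_sphere_1_step[OF assms, of u v] "3.prems" by simp
qed

theorem lemma2p10:
  fixes V :: "'a set" and E :: "'a \<Rightarrow> 'a \<Rightarrow> bool" and x :: 'a
  assumes "simple_graph V E"
    and "connected_graph V E"
    and "reflective V E"
    and "x \<in> V"
    and "induced_connected E (sphere V E 1 x)"
  shows "isometric E (sphere V E 1 x)"
  unfolding isometric_def
proof (intro ballI)
  fix w w' assume w: "w \<in> sphere V E 1 x" and w': "w' \<in> sphere V E 1 x"
  obtain xs where "walk_betw E w xs w'" "set xs \<subseteq> sphere V E 1 x"
    using assms(5) w w' unfolding induced_connected_def by blast
  then have "within_two E (sphere V E 1 x) w w'"
    using within_two_sphere_1_walk[OF assms(1-4)] unfolding walk_betw_def by blast
  moreover have "sphere V E 1 x \<subseteq> V"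
    unfolding sphere_def by blast
  ultimately show "\<exists>xs. walk_betw E w xs w' \<and> length xs = Suc (dist E w w')
      \<and> set xs \<subseteq> sphere V E 1 x"
    using within_two_imp_shortest_walk[OF assms(1,2)] w w' by blast
qed

end
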